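(* Let $R \in \mathcal{R}$ and let $R^\perp = \bigcup\{X : X \text{ is a nice set and } R = X \to \mathcal{N}\}$. Then (1) $R^\perp$ is a nice set, and (2) $R = R^\perp \to \mathcal{N}$.
   Context: With disjoint sets of $\lambda$-variables $x,y,\dots$ and $\mu$-variables $a,b,\dots$, terms and $\mathcal{E}$-terms are $\mathcal{T} ::= x \mid \lambda x.\mathcal{T} \mid (\mathcal{T}\;\mathcal{E}) \mid \langle \mathcal{T},\mathcal{T}\rangle \mid \omega_1\mathcal{T} \mid \omega_2\mathcal{T} \mid \mu a.\mathcal{T} \mid (a\;\mathcal{T})$, $\mathcal{E} ::= \mathcal{T} \mid \pi_1 \mid \pi_2 \mid [x.\mathcal{T}, y.\mathcal{T}]$ (up to renaming of bound variables). The one-step reduction $\triangleright$ is the closure under all constructors of: $(\lambda x.u\;v)\triangleright u[x:=v]$; $(\langle t_1,t_2\rangle\;\pi_i)\triangleright t_i$; $(\omega_i t\;[x_1.u_1,x_2.u_2])\triangleright u_i[x_i:=t]$; $((t\;[x_1.u_1,x_2.u_2])\;\varepsilon)\triangleright(t\;[x_1.(u_1\;\varepsilon),x_2.(u_2\;\varepsilon)])$; $(\mu a.t\;\varepsilon)\triangleright\mu a.t[a:=^*\varepsilon]$, where $t[a:=^*\varepsilon]$ replaces inductively each subterm $(a\;v)$ by $(a\;(v\;\varepsilon))$. $\mathcal{N}$ (resp. $\mathcal{N}'$) is the set of strongly normalizable terms (resp. $\mathcal{E}$-terms), $\mathcal{N}'^{<\omega}$ the set of finite sequences of elements of $\mathcal{N}'$.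 For $\bar{w}=w_1\dots w_n$ and a term $t$, $(t\;\bar{w})$ is $t$ if $n=0$ and $((t\;w_1)\;w_2\dots w_n)$ otherwise. For $S\subseteq\mathcal{N}'^{<\omega}$ and a set of terms $K$, $S\to K=\{t\in\mathcal{T} : (t\;\bar{w})\in K \text{ for each } \bar{w}\in S\}$. A sequence $\bar{w}\in\mathcal{N}'^{<\omega}$ is nice iff none of $w_1,\dots,w_{n-1}$ is of the form $[x.u,y.v]$; a set $X\subseteq\mathcal{N}'^{<\omega}$ is nice iff all its elements are nice. For sets $K,L$ of terms: $K\to L=\{t : (t\;u)\in L \text{ for all } u\in K\}$; $K\wedge L=\{t : (t\;\pi_1)\in K, (t\;\pi_2)\in L\}$; $K\vee L=\{t :$ for all $\lambda$-variables $x,y$ and all $u,v\in\mathcal{N}$, if $u[x:=r]\in\mathcal{N}$ and $v[y:=s]\in\mathcal{N}$ for all $r\in K,s\in L$, then $(t\;[x.u,y.v])\in\mathcal{N}\}$. $\mathcal{R}$ is the smallest set of sets of terms containing $\mathcal{N}$ and closed under $\to,\wedge,\vee$. *)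

theory Defs
  imports Main
begin

text \<open>Terms of the lambda-mu calculus with pairs and sums, in de Bruijn
representation (terms up to renaming of bound variables).  There are two
separate index spaces: lambda-variables (Var i) and mu-variables (Named a t
stands for (a t)).  Lam and the two branches of Cas bind a lambda-variable,
Mu binds a mu-variable.\<close>

datatype trm =
    Var nat
  | Lam trm
  | App trm etrm
  | Pair trm trm
  | In1 trm
  | In2 trm
  | Mu trm
  | Named nat trm
and etrm =
    Tm trm
  | Pi1
  | Pi2
  | Cas trm trm

primrec liftL :: "nat \<Rightarrow> trm \<Rightarrow> trm" and liftLe :: "nat \<Rightarrow> etrm \<Rightarrow> etrm" where
  "liftL k (Var i) = Var (if i < k then i else Suc i)"
| "liftL k (Lam t) = Lam (liftL (Suc k) t)"
| "liftL k (App t e) = App (liftL k t) (liftLe k e)"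
| "liftL k (Pair t u) = Pair (liftL k t) (liftL k u)"
| "liftL k (In1 t) = In1 (liftL k t)"
| "liftL k (In2 t) = In2 (liftL k t)"
| "liftL k (Mu t) = Mu (liftL k t)"
| "liftL k (Named a t) = Named a (liftL k t)"
| "liftLe k (Tm t) = Tm (liftL k t)"
| "liftLe k Pi1 = Pi1"
| "liftLe k Pi2 = Pi2"
| "liftLe k (Cas u v) = Cas (liftL (Suc k) u) (liftL (Suc k) v)"

primrec liftM :: "nat \<Rightarrow> trm \<Rightarrow> trm" and liftMe :: "nat \<Rightarrow> etrm \<Rightarrow> etrm" where
  "liftM k (Var i) = Var i"
| "liftM k (Lam t) = Lam (liftM k t)"
| "liftM k (App t e) = App (liftM k t) (liftMe k e)"
| "liftM k (Pair t u) = Pair (liftM k t) (liftM k u)"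
| "liftM k (In1 t) = In1 (liftM k t)"
| "liftM k (In2 t) = In2 (liftM k t)"
| "liftM k (Mu t) = Mu (liftM (Suc k) t)"
| "liftM k (Named a t) = Named (if a < k then a else Suc a) (liftM k t)"
| "liftMe k (Tm t) = Tm (liftM k t)"
| "liftMe k Pi1 = Pi1"
| "liftMe k Pi2 = Pi2"
| "liftMe k (Cas u v) = Cas (liftM k u) (liftM k v)"

text \<open>substL k s t = t[k := s] (capture-avoiding substitution for the
lambda-variable k; free lambda-variables above k are decremented).\<close>
primrec substL :: "nat \<Rightarrow> trm \<Rightarrow> trm \<Rightarrow> trm"
  and substLe :: "nat \<Rightarrow> trm \<Rightarrow> etrm \<Rightarrow> etrm" where
  "substL k s (Var i) = (if i < k then Var i else if i = k then s else Var (i - 1))"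
| "substL k s (Lam t) = Lam (substL (Suc k) (liftL 0 s) t)"
| "substL k s (App t e) = App (substL k s t) (substLe k s e)"
| "substL k s (Pair t u) = Pair (substL k s t) (substL k s u)"
| "substL k s (In1 t) = In1 (substL k s t)"
| "substL k s (In2 t) = In2 (substL k s t)"
| "substL k s (Mu t) = Mu (substL k (liftM 0 s) t)"
| "substL k s (Named a t) = Named a (substL k s t)"
| "substLe k s (Tm t) = Tm (substL k s t)"
| "substLe k s Pi1 = Pi1"
| "substLe k s Pi2 = Pi2"
| "substLe k s (Cas u v) = Cas (substL (Suc k) (liftL 0 s) u) (substL (Suc k) (liftL 0 s) v)"

text \<open>substM k e t = t[k :=* e]: every subterm (k v) is replaced
(inductively) by (k (v e)).\<close>
primrec substM :: "nat \<Rightarrow> etrm \<Rightarrow> trm \<Rightarrow> trm"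
  and substMe :: "nat \<Rightarrow> etrm \<Rightarrow> etrm \<Rightarrow> etrm" where
  "substM k e (Var i) = Var i"
| "substM k e (Lam t) = Lam (substM k (liftLe 0 e) t)"
| "substM k e (App t f) = App (substM k e t) (substMe k e f)"
| "substM k e (Pair t u) = Pair (substM k e t) (substM k e u)"
| "substM k e (In1 t) = In1 (substM k e t)"
| "substM k e (In2 t) = In2 (substM k e t)"
| "substM k e (Mu t) = Mu (substM (Suc k) (liftMe 0 e) t)"
| "substM k e (Named a t) =
     (if a = k then Named a (App (substM k e t) e) else Named a (substM k e t))"
| "substMe k e (Tm t) = Tm (substM k e t)"
| "substMe k e Pi1 = Pi1"
| "substMe k e Pi2 = Pi2"
| "substMe k e (Cas u v) = Cas (substM k (liftLe 0 e) u) (substM k (liftLe 0 e) v)"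

inductive red :: "trm \<Rightarrow> trm \<Rightarrow> bool" and rede :: "etrm \<Rightarrow> etrm \<Rightarrow> bool" where
  beta: "red (App (Lam u) (Tm v)) (substL 0 v u)"
| proj1: "red (App (Pair t1 t2) Pi1) t1"
| proj2: "red (App (Pair t1 t2) Pi2) t2"
| case1: "red (App (In1 t) (Cas u1 u2)) (substL 0 t u1)"
| case2: "red (App (In2 t) (Cas u1 u2)) (substL 0 t u2)"
| comm: "red (App (App t (Cas u1 u2)) e)
             (App t (Cas (App u1 (liftLe 0 e)) (App u2 (liftLe 0 e))))"
| mu: "red (App (Mu t) e) (Mu (substM 0 (liftMe 0 e) t))"
| c_Lam: "red t t' \<Longrightarrow> red (Lam t) (Lam t')"
| c_App1: "red t t' \<Longrightarrow> red (App t e) (App t' e)"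
| c_App2: "rede e e' \<Longrightarrow> red (App t e) (App t e')"
| c_Pair1: "red t t' \<Longrightarrow> red (Pair t u) (Pair t' u)"
| c_Pair2: "red u u' \<Longrightarrow> red (Pair t u) (Pair t u')"
| c_In1: "red t t' \<Longrightarrow> red (In1 t) (In1 t')"
| c_In2: "red t t' \<Longrightarrow> red (In2 t) (In2 t')"
| c_Mu: "red t t' \<Longrightarrow> red (Mu t) (Mu t')"
| c_Named: "red t t' \<Longrightarrow> red (Named a t) (Named a t')"
| c_Tm: "red t t' \<Longrightarrow> rede (Tm t) (Tm t')"
| c_Cas1: "red u u' \<Longrightarrow> rede (Cas u v) (Cas u' v)"
| c_Cas2: "red v v' \<Longrightarrow> rede (Cas u v) (Cas u v')"

definition SN :: "trm set" where
  "SN = {t. Wellfounded.accp (conversep red) t}"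

definition SNe :: "etrm set" where
  "SNe = {e. Wellfounded.accp (conversep rede) e}"

definition app_seq :: "trm \<Rightarrow> etrm list \<Rightarrow> trm" where
  "app_seq t ws = foldl App t ws"

definition seq_arrow :: "etrm list set \<Rightarrow> trm set \<Rightarrow> trm set" where
  "seq_arrow S K = {t. \<forall>ws\<in>S. app_seq t ws \<in> K}"

fun is_cas :: "etrm \<Rightarrow> bool" where
  "is_cas (Cas u v) = True"
| "is_cas _ = False"

definition nice_seq :: "etrm list \<Rightarrow> bool" where
  "nice_seq ws \<longleftrightarrow> set ws \<subseteq> SNe \<and> (\<forall>i. i + 1 < length ws \<longrightarrow> \<not> is_cas (ws ! i))"

definition nice_set :: "etrm list set \<Rightarrow> bool" where
  "nice_set X \<longleftrightarrow> (\<forall>ws\<in>X. nice_seq ws)"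

definition arrow :: "trm set \<Rightarrow> trm set \<Rightarrow> trm set" where
  "arrow K L = {t. \<forall>u\<in>K. App t (Tm u) \<in> L}"

definition conj :: "trm set \<Rightarrow> trm set \<Rightarrow> trm set" where
  "conj K L = {t. App t Pi1 \<in> K \<and> App t Pi2 \<in> L}"

text \<open>In de Bruijn form, the bound variables x, y of [x.u, y.v] are index 0
of the bodies u, v; quantification over x, y is subsumed.\<close>
definition disj :: "trm set \<Rightarrow> trm set \<Rightarrow> trm set" where
  "disj K L = {t. \<forall>u v. u \<in> SN \<longrightarrow> v \<in> SN \<longrightarrow>
      (\<forall>r\<in>K. substL 0 r u \<in> SN) \<longrightarrow> (\<forall>s\<in>L. substL 0 s v \<in> SN) \<longrightarrow>
      App t (Cas u v) \<in> SN}"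

inductive_set RR :: "trm set set" where
  RR_N: "SN \<in> RR"
| RR_arrow: "K \<in> RR \<Longrightarrow> L \<in> RR \<Longrightarrow> arrow K L \<in> RR"
| RR_conj: "K \<in> RR \<Longrightarrow> L \<in> RR \<Longrightarrow> conj K L \<in> RR"
| RR_disj: "K \<in> RR \<Longrightarrow> L \<in> RR \<Longrightarrow> disj K L \<in> RR"

definition perp :: "trm set \<Rightarrow> etrm list set" where
  "perp R = \<Union>{X. nice_set X \<and> R = seq_arrow X SN}"

end

theory Submission
  imports Defs
begin

text \<open>By induction on \<open>RR\<close>, every \<open>R \<in> RR\<close> is \<open>X \<rightarrow> SN\<close> for some nice \<open>X\<close>:
\<open>SN = {[]} \<rightarrow> SN\<close>; \<open>K \<rightarrow> (Y \<rightarrow> SN)\<close> is tested by the sequences \<open>u # ws\<close> with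
\<open>u \<in> K\<close>, \<open>ws \<in> Y\<close>; \<open>(X \<rightarrow> SN) \<and> (Y \<rightarrow> SN)\<close> by \<open>\<pi>\<^sub>1 # X \<union> \<pi>\<^sub>2 # Y\<close>; and \<open>K \<or> L\<close> by the
one-element sequences \<open>[x.u, y.v]\<close> of its definition.  Niceness of these
sequences needs \<open>K \<subseteq> SN\<close>, which is carried along: a variable followed by a
nice sequence is strongly normalizable, so variables lie in every such \<open>R\<close>.
Since \<open>_ \<rightarrow> SN\<close> turns unions into intersections, \<open>R\<^sup>\<bottom> \<rightarrow> SN\<close> is the
intersection of all nice representations of \<open>R\<close>, which is \<open>R\<close> itself.\<close>

lemma accp_image:
  assumes "Wellfounded.accp r x"
    and "\<And>x z. s z (f x) \<Longrightarrow> \<exists>x'. r x' x \<and> z = f x'"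
  shows "Wellfounded.accp s (f x)"
  using assms(1)
proof (induction rule: accp_induct_rule)
  case (1 x)
  show ?case
    by (rule accpI) (use 1 assms(2) in blast)
qed

lemma accp_image_pair:
  assumes "Wellfounded.accp r x" and "Wellfounded.accp q y" and "P x"
    and "\<And>x y z. P x \<Longrightarrow> s z (f x y) \<Longrightarrow>
      (\<exists>x'. r x' x \<and> P x' \<and> z = f x' y) \<or> (\<exists>y'. q y' y \<and> z = f x y')"
  shows "Wellfounded.accp s (f x y)"
  using assms(1-3)
proof (induction x arbitrary: y rule: accp_induct_rule)
  case (1 x)
  note IH_x = "1.IH"
  from \<open>Wellfounded.accp q y\<close> show ?case
  proof (induction y rule: accp_induct_rule)
    case (1 y)
    show ?case
    proof (rule accpI)
      fix z assume "s z (f x y)"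
      with assms(4) \<open>P x\<close> consider
          x' where "r x' x" "P x'" "z = f x' y" | y' where "q y' y" "z = f x y'"
        by blast
      then show "Wellfounded.accp s z"
        by cases (use IH_x "1.IH" "1.hyps" in \<open>blast intro: accpI\<close>)+
    qed
  qed
qed

lemma accp_reflect:
  assumes "Wellfounded.accp s (f x)" and "\<And>x y. r y x \<Longrightarrow> s (f y) (f x)"
  shows "Wellfounded.accp r x"
proof -
  have "\<forall>x. z = f x \<longrightarrow> Wellfounded.accp r x" if "Wellfounded.accp s z" for z
    using that
  proof (induction rule: accp_induct_rule)
    case (1 z)
    then show ?case using assms(2) by (blast intro: accpI)
  qed
  then show ?thesis using assms(1) by blast
qed

lemma nice_seq_Nil [simp]: "nice_seq []"
  by (simp add: nice_seq_def)

lemma nice_seq_Cons: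
  "nice_seq (w # ws) \<longleftrightarrow> w \<in> SNe \<and> nice_seq ws \<and> (ws \<noteq> [] \<longrightarrow> \<not> is_cas w)"
  by (auto simp: nice_seq_def nth_Cons split: nat.splits)

lemma app_seq_Cons: "app_seq t (w # ws) = app_seq (App t w) ws"
  by (simp add: app_seq_def)

lemma SN_iff_accp: "t \<in> SN \<longleftrightarrow> Wellfounded.accp (conversep red) t"
  by (simp add: SN_def)

lemma SNe_iff_accp: "e \<in> SNe \<longleftrightarrow> Wellfounded.accp (conversep rede) e"
  by (simp add: SNe_def)

inductive_cases red_VarE: "red (Var i) t'"
inductive_cases red_AppE: "red (App t e) t'"
inductive_cases rede_TmE: "rede (Tm t) e'"
inductive_cases rede_Pi1E: "rede Pi1 e'"
inductive_cases rede_Pi2E: "rede Pi2 e'"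
inductive_cases rede_CasE: "rede (Cas u v) e'"

lemma Var_SN: "Var i \<in> SN"
  unfolding SN_iff_accp by (rule accpI) (auto elim: red_VarE)

lemma Pi1_SNe: "Pi1 \<in> SNe"
  unfolding SNe_iff_accp by (rule accpI) (auto elim: rede_Pi1E)

lemma Pi2_SNe: "Pi2 \<in> SNe"
  unfolding SNe_iff_accp by (rule accpI) (auto elim: rede_Pi2E)

lemma Tm_SNe: "t \<in> SN \<Longrightarrow> Tm t \<in> SNe"
  unfolding SN_iff_accp SNe_iff_accp
  by (erule accp_image[where f = Tm]) (auto elim: rede_TmE)

lemma Cas_SNe: "u \<in> SN \<Longrightarrow> v \<in> SN \<Longrightarrow> Cas u v \<in> SNe"
  unfolding SN_iff_accp SNe_iff_accp
  by (rule accp_image_pair[where f = Cas and P = "\<lambda>_. True"]) (auto elim: rede_CasE)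

lemma SN_AppD: "App t e \<in> SN \<Longrightarrow> t \<in> SN"
  unfolding SN_iff_accp
  by (erule accp_reflect[where f = "\<lambda>t. App t e"]) (simp add: c_App1)

text \<open>A variable applied to eliminators other than case: such a head never forms
a redex with a further eliminator.\<close>

inductive neutral :: "trm \<Rightarrow> bool" where
  neutral_Var: "neutral (Var i)"
| neutral_App: "neutral t \<Longrightarrow> \<not> is_cas e \<Longrightarrow> neutral (App t e)"

inductive_cases neutralE: "neutral (Lam t)" "neutral (Pair t u)" "neutral (In1 t)"
  "neutral (In2 t)" "neutral (Mu t)" "neutral (App t e)"

lemma rede_is_cas: "rede e e' \<Longrightarrow> is_cas e' = is_cas e"
  by (cases e) (auto elim: rede_TmE rede_Pi1E rede_Pi2E rede_CasE)

lemma red_App_neutral: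
  assumes "neutral t" and "red (App t e) t'"
  shows "(\<exists>t''. red t t'' \<and> t' = App t'' e) \<or> (\<exists>e'. rede e e' \<and> t' = App t e')"
  using assms(2,1) by (cases rule: red_AppE) (auto elim: neutralE)

lemma neutral_red: "neutral t \<Longrightarrow> red t t' \<Longrightarrow> neutral t'"
proof (induction t arbitrary: t' rule: neutral.induct)
  case (neutral_Var i)
  then show ?case by (auto elim: red_VarE)
next
  case (neutral_App t e)
  from red_App_neutral[OF neutral_App.hyps(1) neutral_App.prems] show ?case
    using neutral_App.hyps neutral_App.IH by (auto intro: neutral.intros dest: rede_is_cas)
qed

lemma App_neutral_SN:
  assumes "neutral t" and "t \<in> SN" and "e \<in> SNe"
  shows "App t e \<in> SN"
  unfolding SN_iff_accp
proof (rule accp_image_pair[where f = App and P = neutral])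
  fix x y z
  assume "neutral x" and "conversep red z (App x y)"
  then show "(\<exists>x'. conversep red x' x \<and> neutral x' \<and> z = App x' y) \<or>
      (\<exists>y'. conversep rede y' y \<and> z = App x y')"
    using red_App_neutral neutral_red by fastforce
qed (use assms in \<open>simp_all only: SN_iff_accp SNe_iff_accp\<close>)

lemma app_seq_neutral_SN:
  "neutral t \<Longrightarrow> t \<in> SN \<Longrightarrow> nice_seq ws \<Longrightarrow> app_seq t ws \<in> SN"
proof (induction ws arbitrary: t)
  case Nil
  then show ?case by (simp add: app_seq_def)
next
  case (Cons w ws)
  then have "App t w \<in> SN" by (simp add: nice_seq_Cons App_neutral_SN)
  moreover have "neutral (App t w)" if "ws \<noteq> []"
    using Cons.prems that by (simp add: nice_seq_Cons neutral_App)
  ultimately show ?case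
    using Cons by (cases "ws = []") (auto simp: app_seq_Cons app_seq_def nice_seq_Cons)
qed

lemma Var_in_seq_arrow_SN: "nice_set X \<Longrightarrow> Var i \<in> seq_arrow X SN"
  by (auto simp: nice_set_def seq_arrow_def intro: app_seq_neutral_SN neutral_Var Var_SN)

lemma arrow_seq_arrow:
  "arrow K (seq_arrow Y L) = seq_arrow {Tm u # ws | u ws. u \<in> K \<and> ws \<in> Y} L"
proof (rule set_eqI)
  fix t
  have "t \<in> arrow K (seq_arrow Y L) \<longleftrightarrow> (\<forall>u\<in>K. \<forall>ws\<in>Y. app_seq t (Tm u # ws) \<in> L)"
    by (simp add: arrow_def seq_arrow_def app_seq_Cons)
  also have "\<dots> \<longleftrightarrow> t \<in> seq_arrow {Tm u # ws | u ws. u \<in> K \<and> ws \<in> Y} L"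
    by (auto simp: seq_arrow_def)
  finally show "t \<in> arrow K (seq_arrow Y L) \<longleftrightarrow> \<dots>" .
qed

lemma nice_set_Tm_Cons:
  "K \<subseteq> SN \<Longrightarrow> nice_set Y \<Longrightarrow> nice_set {Tm u # ws | u ws. u \<in> K \<and> ws \<in> Y}"
  by (auto simp: nice_set_def nice_seq_Cons Tm_SNe)

lemma arrow_subset_SN: "Var i \<in> K \<Longrightarrow> L \<subseteq> SN \<Longrightarrow> arrow K L \<subseteq> SN"
  by (auto simp: arrow_def intro: SN_AppD)

lemma conj_seq_arrow:
  "conj (seq_arrow X L) (seq_arrow Y L) = seq_arrow (Cons Pi1 ` X \<union> Cons Pi2 ` Y) L"
  by (simp add: conj_def seq_arrow_def ball_Un Ball_image_comp comp_def app_seq_Cons)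

lemma nice_set_proj_Cons:
  "nice_set X \<Longrightarrow> nice_set Y \<Longrightarrow> nice_set (Cons Pi1 ` X \<union> Cons Pi2 ` Y)"
  by (auto simp: nice_set_def nice_seq_Cons Pi1_SNe Pi2_SNe)

lemma conj_subset_SN: "K \<subseteq> SN \<Longrightarrow> conj K L \<subseteq> SN"
  by (auto simp: conj_def intro: SN_AppD)

definition cas_tests :: "trm set \<Rightarrow> trm set \<Rightarrow> etrm list set" where
  "cas_tests K L = {[Cas u v] | u v. u \<in> SN \<and> v \<in> SN \<and>
     (\<forall>r\<in>K. substL 0 r u \<in> SN) \<and> (\<forall>s\<in>L. substL 0 s v \<in> SN)}"

lemma disj_eq_seq_arrow: "disj K L = seq_arrow (cas_tests K L) SN"
proof (intro set_eqI iffI)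
  fix t assume t: "t \<in> disj K L"
  show "t \<in> seq_arrow (cas_tests K L) SN"
    unfolding seq_arrow_def mem_Collect_eq
  proof
    fix ws assume "ws \<in> cas_tests K L"
    then obtain u v where "ws = [Cas u v]" and "u \<in> SN" "v \<in> SN"
      "\<forall>r\<in>K. substL 0 r u \<in> SN" "\<forall>s\<in>L. substL 0 s v \<in> SN"
      by (auto simp: cas_tests_def)
    with t show "app_seq t ws \<in> SN"
      by (simp add: disj_def app_seq_def)
  qed
next
  fix t assume t: "t \<in> seq_arrow (cas_tests K L) SN"
  show "t \<in> disj K L"
    unfolding disj_def mem_Collect_eq
  proof (intro allI impI)
    fix u v
    assume "u \<in> SN" "v \<in> SN" "\<forall>r\<in>K. substL 0 r u \<in> SN" "\<forall>s\<in>L. substL 0 s v \<in> SN"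
    then have "[Cas u v] \<in> cas_tests K L"
      unfolding cas_tests_def by blast
    with t have "app_seq t [Cas u v] \<in> SN"
      unfolding seq_arrow_def by blast
    then show "App t (Cas u v) \<in> SN"
      by (simp add: app_seq_def)
  qed
qed

lemma nice_set_cas_tests: "nice_set (cas_tests K L)"
  by (auto simp: nice_set_def cas_tests_def nice_seq_Cons Cas_SNe)

lemma disj_subset_SN: "K \<subseteq> SN \<Longrightarrow> L \<subseteq> SN \<Longrightarrow> disj K L \<subseteq> SN"
proof
  fix t assume "K \<subseteq> SN" "L \<subseteq> SN" "t \<in> disj K L"
  then have "App t (Cas (Var 0) (Var 0)) \<in> SN"
    unfolding disj_def using Var_SN by (simp add: subset_iff)
  then show "t \<in> SN" by (rule SN_AppD)
qed

lemma RR_nice_representation: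
  assumes "R \<in> RR"
  shows "(\<exists>X. nice_set X \<and> R = seq_arrow X SN) \<and> R \<subseteq> SN"
  using assms
proof (induction rule: RR.induct)
  case RR_N
  have "SN = seq_arrow {[]} SN" by (simp add: seq_arrow_def app_seq_def)
  moreover have "nice_set {[]}" by (simp add: nice_set_def)
  ultimately show ?case by blast
next
  case (RR_arrow K L)
  then obtain X Y where X: "nice_set X" "K = seq_arrow X SN"
    and Y: "nice_set Y" "L = seq_arrow Y SN" and "L \<subseteq> SN"
    by blast
  have "arrow K L = seq_arrow {Tm u # ws | u ws. u \<in> K \<and> ws \<in> Y} SN"
    using Y(2) by (simp add: arrow_seq_arrow)
  moreover have "nice_set {Tm u # ws | u ws. u \<in> K \<and> ws \<in> Y}"
    using RR_arrow.IH Y(1) by (blast intro: nice_set_Tm_Cons)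
  moreover have "Var 0 \<in> K"
    using X by (simp add: Var_in_seq_arrow_SN)
  then have "arrow K L \<subseteq> SN"
    using \<open>L \<subseteq> SN\<close> by (rule arrow_subset_SN)
  ultimately show ?case by blast
next
  case (RR_conj K L)
  then obtain X Y where X: "nice_set X" "K = seq_arrow X SN"
    and Y: "nice_set Y" "L = seq_arrow Y SN" and "K \<subseteq> SN"
    by blast
  have "conj K L = seq_arrow (Cons Pi1 ` X \<union> Cons Pi2 ` Y) SN"
    using X(2) Y(2) by (simp add: conj_seq_arrow)
  moreover have "nice_set (Cons Pi1 ` X \<union> Cons Pi2 ` Y)"
    using X(1) Y(1) by (rule nice_set_proj_Cons)
  moreover have "conj K L \<subseteq> SN"
    using \<open>K \<subseteq> SN\<close> by (rule conj_subset_SN)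
  ultimately show ?case by blast
next
  case (RR_disj K L)
  then have "disj K L \<subseteq> SN" by (intro disj_subset_SN) blast+
  then show ?case using disj_eq_seq_arrow nice_set_cas_tests by blast
qed

lemma seq_arrow_Union: "seq_arrow (\<Union>F) K = (\<Inter>X\<in>F. seq_arrow X K)"
  by (auto simp: seq_arrow_def)

lemma nice_set_Union: "(\<And>X. X \<in> F \<Longrightarrow> nice_set X) \<Longrightarrow> nice_set (\<Union>F)"
  by (auto simp: nice_set_def)

lemma seq_arrow_perp:
  assumes "nice_set X" and "R = seq_arrow X SN"
  shows "seq_arrow (perp R) SN = R"
proof -
  have "seq_arrow (perp R) SN = (\<Inter>Y\<in>{Y. nice_set Y \<and> R = seq_arrow Y SN}. seq_arrow Y SN)"
    by (simp add: perp_def seq_arrow_Union)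
  also have "\<dots> = R"
    using assms by auto
  finally show ?thesis .
qed

theorem lemma7:
  assumes "R \<in> RR"
  shows "nice_set (perp R) \<and> R = seq_arrow (perp R) SN"
proof
  show "nice_set (perp R)"
    unfolding perp_def by (rule nice_set_Union) blast
  obtain X where "nice_set X" and "R = seq_arrow X SN"
    using RR_nice_representation[OF assms] by blast
  then show "R = seq_arrow (perp R) SN"
    by (simp add: seq_arrow_perp)
qed

end
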